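(* Fix $B>0$. For an integer $k\ge1$ and $p\in(0,1)$ let \[V_k(p)=\Big(\frac1p+\frac2{1-p}\Big)B^2k+\frac{2B^2(p^{k}-1)}{(1-p)^2},\] the worst-case (over potential outcomes in $[0,B]$) variance of the path-level Horvitz–Thompson estimator on an alternating path of length $k$ under the Alternating Path Randomized Design with parameter $p$. Let $p^*_k$ denote the optimal (minimizing) value of $p$ for $V_k$. Then $\lim_{k\to\infty}p^*_k=\sqrt2-1$.
   Context: Alternating Path Randomized Design on an alternating path with edges $e_1,\dots,e_k$ (consecutive edges alternate between treatment-only and control-only matches): indicators $W_1,\dots,W_k\in\{0,1\}$ with $\mathbb{P}(W_1=1)=p/(1+p)$ and, for $j\ge2$, conditionally on $W_1,\dots,W_{j-1}$, $W_j=1$ with probability $p$ if $W_{j-1}=0$ and $W_j=0$ if $W_{j-1}=1$. The path-level estimator is $\hat\Gamma=\sum_j (-1)^{j+1}W_jY_{e_j}/\mathbb{P}(W_j=1)$ (up to a global sign), and $V_k(p)=\max_{Y_{e_j}\in[0,B]}\mathrm{Var}(\hat\Gamma)$, which equals the displayed formula. The minimization is over the design parameter $p\in(0,1)$. *)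

theory Defs
  imports Complex_Main
begin

definition Vk :: "real \<Rightarrow> nat \<Rightarrow> real \<Rightarrow> real" where
  "Vk B k p = (1 / p + 2 / (1 - p)) * B^2 * real k + 2 * B^2 * (p ^ k - 1) / (1 - p)^2"

definition is_opt_p :: "real \<Rightarrow> nat \<Rightarrow> real \<Rightarrow> bool" where
  "is_opt_p B k p \<longleftrightarrow> p \<in> {0<..<1} \<and> (\<forall>q \<in> {0<..<1}. Vk B k p \<le> Vk B k q)"

end

theory Submission
  imports Defs
begin

text \<open>
  For \<open>0 < p < 1\<close>, \<open>V\<^sub>k(p)/B\<^sup>2 = k g(p) + 2 (p\<^sup>k - 1)/(1 - p)\<^sup>2\<close> with
  \<open>g(p) = 1/p + 2/(1 - p)\<close>, the correction term lying in \<open>[-2/(1 - p)\<^sup>2, 0]\<close>.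
  The rate \<open>g\<close> is minimal at \<open>s = \<surd>2 - 1\<close>, with \<open>g(s) = 3 + 2\<surd>2 < 6\<close>, and since
  \<open>g'(s) = 0\<close> it dominates a parabola there: \<open>g(p) - g(s) \<ge> (p - s)\<^sup>2\<close>.
  The identity \<open>V\<^sub>k(p)/B\<^sup>2 = k/p + 2 \<Sum>i<k. \<Sum>j<i. p\<^sup>j\<close> shows that \<open>V\<^sub>k/B\<^sup>2 > 6k\<close> for
  \<open>p < 1/6\<close> and, once \<open>k \<ge> 11\<close>, for \<open>p \<ge> 3/4\<close>. Hence a minimiser \<open>p\<^sup>*\<^sub>k\<close> exists and
  lies below \<open>3/4\<close>, where the correction is at least \<open>-32\<close>, and comparing with \<open>V\<^sub>k(s)\<close>
  gives \<open>k (p\<^sup>*\<^sub>k - s)\<^sup>2 \<le> 32\<close>.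
\<close>

definition iterated_geometric_sum :: "nat \<Rightarrow> 'a::comm_ring_1 \<Rightarrow> 'a" where
  "iterated_geometric_sum k p = (\<Sum>i<k. \<Sum>j<i. p ^ j)"

lemma iterated_geometric_sum_closed_form:
  "(1 - p)^2 * iterated_geometric_sum k p = of_nat k * (1 - p) + p ^ k - 1"
proof (induction k)
  case 0
  then show ?case by (simp add: iterated_geometric_sum_def)
next
  case (Suc k)
  have "(1 - p)^2 * iterated_geometric_sum (Suc k) p
      = (1 - p)^2 * iterated_geometric_sum k p + (1 - p) * ((1 - p) * (\<Sum>j<k. p ^ j))"
    by (simp add: iterated_geometric_sum_def power2_eq_square algebra_simps)
  also have "\<dots> = of_nat k * (1 - p) + p ^ k - 1 + (1 - p) * (1 - p ^ k)"
    by (simp add: Suc.IH one_diff_power_eq)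
  also have "\<dots> = of_nat (Suc k) * (1 - p) + p ^ Suc k - 1"
    by (simp add: algebra_simps)
  finally show ?case .
qed

lemma iterated_geometric_sum_nonneg:
  "0 \<le> p \<Longrightarrow> 0 \<le> iterated_geometric_sum k (p::'a::linordered_idom)"
  unfolding iterated_geometric_sum_def by (intro sum_nonneg) auto

lemma iterated_geometric_sum_mono:
  "0 \<le> p \<Longrightarrow> p \<le> q \<Longrightarrow>
    iterated_geometric_sum k p \<le> iterated_geometric_sum k (q::'a::linordered_idom)"
  unfolding iterated_geometric_sum_def by (intro sum_mono power_mono) auto

lemma iterated_geometric_sum_three_quarters:
  "4 * real k - 16 \<le> iterated_geometric_sum k (3/4 :: real)"
proof -
  have geometric: "(\<Sum>j<i. (3/4::real) ^ j) = 4 - 4 * (3/4) ^ i" for i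
    using one_diff_power_eq[of "3/4::real" i] by simp
  have "iterated_geometric_sum k (3/4 :: real) = (\<Sum>i<k. 4 - 4 * (3/4) ^ i)"
    unfolding iterated_geometric_sum_def geometric ..
  also have "\<dots> = 4 * real k - 4 * (\<Sum>i<k. (3/4::real) ^ i)"
    by (simp add: sum_subtractf sum_distrib_left)
  also have "\<dots> = 4 * real k - 16 + 16 * (3/4) ^ k"
    by (simp add: geometric)
  finally show ?thesis by simp
qed

definition variance_rate :: "real \<Rightarrow> real" where
  "variance_rate p = 1 / p + 2 / (1 - p)"

lemma Vk_eq_variance_rate:
  "Vk B k p = B^2 * (real k * variance_rate p + 2 * (p ^ k - 1) / (1 - p)^2)"
  unfolding Vk_def variance_rate_def by (simp add: algebra_simps)

lemma Vk_eq_iterated_geometric_sum: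
  assumes "p \<noteq> 0" "p \<noteq> 1"
  shows "Vk B k p = B^2 * (real k / p + 2 * iterated_geometric_sum k p)"
proof -
  have "1 - p \<noteq> 0" using assms by simp
  then have "iterated_geometric_sum k p = (real k * (1 - p) + p ^ k - 1) / (1 - p)^2"
    using iterated_geometric_sum_closed_form[of p k] by (simp add: eq_divide_eq mult.commute)
  also have "\<dots> = real k / (1 - p) + (p ^ k - 1) / (1 - p)^2"
    using \<open>1 - p \<noteq> 0\<close> by (simp add: diff_divide_distrib add_divide_distrib power2_eq_square)
  finally show ?thesis unfolding Vk_def by (simp add: algebra_simps)
qed

lemma Vk_scale: "Vk B k p = B^2 * Vk 1 k p"
  unfolding Vk_def by (simp add: algebra_simps)

lemma is_opt_p_scale_iff:
  assumes "B \<noteq> 0"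
  shows "is_opt_p B k p \<longleftrightarrow> is_opt_p 1 k p"
  using assms unfolding is_opt_p_def Vk_scale[of B] by simp

lemma Vk_le_variance_rate:
  assumes "0 \<le> p" "p \<le> 1"
  shows "Vk 1 k p \<le> real k * variance_rate p"
proof -
  have "p ^ k \<le> 1" using assms by (simp add: power_le_one)
  then show ?thesis unfolding Vk_eq_variance_rate by (simp add: divide_nonpos_nonneg)
qed

lemma Vk_ge_variance_rate:
  assumes "0 \<le> p" "p < 3/4"
  shows "real k * variance_rate p - 32 \<le> Vk 1 k p"
proof -
  have "(1/4)^2 \<le> (1 - p)^2" using assms by (intro power_mono) auto
  then have "2 / (1 - p)^2 \<le> 32" using assms by (simp add: field_simps power2_eq_square)
  moreover have "- 2 / (1 - p)^2 \<le> 2 * (p ^ k - 1) / (1 - p)^2"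
    using assms by (intro divide_right_mono) auto
  ultimately show ?thesis unfolding Vk_eq_variance_rate by simp
qed

lemma Vk_ge_inverse:
  assumes "0 < p" "p < 1"
  shows "real k / p \<le> Vk 1 k p"
  using assms iterated_geometric_sum_nonneg[of p k] by (simp add: Vk_eq_iterated_geometric_sum)

lemma Vk_ge_near_one:
  assumes "3/4 \<le> p" "p < 1"
  shows "9 * real k - 32 \<le> Vk 1 k p"
proof -
  have "real k \<le> real k / p" using assms by (simp add: le_divide_eq mult_left_le)
  moreover have "iterated_geometric_sum k (3/4) \<le> iterated_geometric_sum k p"
    using assms by (intro iterated_geometric_sum_mono) auto
  ultimately show ?thesis
    using assms iterated_geometric_sum_three_quarters[of k] by (simp add: Vk_eq_iterated_geometric_sum)
qed

lemma inverse_tangent_gap: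
  fixes x a :: "'a::field"
  assumes "x \<noteq> 0" "a \<noteq> 0"
  shows "1 / x - 1 / a = (x - a)^2 / (x * a^2) - (x - a) / a^2"
  using assms by (simp add: field_simps power2_eq_square)

lemma sqrt2_bounds: "1.41 < sqrt (2::real)" "sqrt (2::real) < 1.42"
  by (rule real_less_rsqrt, simp add: power2_eq_square)
     (rule real_less_lsqrt, simp_all add: power2_eq_square)

lemma variance_rate_sqrt2_minus_1: "variance_rate (sqrt 2 - 1) = 3 + 2 * sqrt 2"
proof -
  have "sqrt 2 - 1 \<noteq> 0" "2 - sqrt 2 \<noteq> (0::real)" using sqrt2_bounds by auto
  then have "1 / (sqrt 2 - 1) = sqrt 2 + 1" "2 / (2 - sqrt 2) = sqrt 2 + (2::real)"
    by (simp_all add: field_simps algebra_simps)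
  then show ?thesis unfolding variance_rate_def by simp
qed

lemma variance_rate_excess:
  assumes "0 < p" "p < 1"
  shows "(p - (sqrt 2 - 1))^2 \<le> variance_rate p - variance_rate (sqrt 2 - 1)"
proof -
  define s :: real where "s = sqrt 2 - 1"
  have s: "0 < s" "s < 1" using sqrt2_bounds unfolding s_def by auto
  have gap0: "1 / p - 1 / s = (p - s)^2 / (p * s^2) - (p - s) / s^2"
    using assms s by (intro inverse_tangent_gap) auto
  have gap1: "1 / (1 - p) - 1 / (1 - s) = (p - s)^2 / ((1 - p) * (1 - s)^2) + (p - s) / (1 - s)^2"
    using inverse_tangent_gap[of "1 - p" "1 - s"] assms s by (simp add: power2_commute minus_divide_left)
  have "(1 - s)^2 = 2 * s^2" unfolding s_def by (simp add: power2_eq_square algebra_simps)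
  then have tangent: "(p - s) / s^2 = 2 * ((p - s) / (1 - s)^2)" using s by (simp add: field_simps)
  have "p * s^2 \<le> 1" using assms s by (simp add: mult_le_one power_le_one)
  then have "(p - s)^2 \<le> (p - s)^2 / (p * s^2)" using assms s by (simp add: le_divide_eq mult_left_le)
  also have "\<dots> \<le> (p - s)^2 / (p * s^2) + 2 * ((p - s)^2 / ((1 - p) * (1 - s)^2))"
    using assms s by simp
  also have "\<dots> = (1 / p - 1 / s) + 2 * (1 / (1 - p) - 1 / (1 - s))"
    unfolding gap0 gap1 tangent by (simp add: algebra_simps)
  also have "\<dots> = variance_rate p - variance_rate s"
    unfolding variance_rate_def by (simp add: right_diff_distrib)
  finally show ?thesis unfolding s_def .
qed

lemma Vk_sqrt2_minus_1_le: "Vk 1 k (sqrt 2 - 1) \<le> 6 * real k"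
proof -
  have "Vk 1 k (sqrt 2 - 1) \<le> real k * (3 + 2 * sqrt 2)"
    using Vk_le_variance_rate[of "sqrt 2 - 1" k] sqrt2_bounds
    by (simp add: variance_rate_sqrt2_minus_1)
  also have "\<dots> \<le> real k * 6" using sqrt2_bounds by (intro mult_left_mono) auto
  finally show ?thesis by simp
qed

lemma Vk_gt_6k_outside:
  assumes "0 < q" "q < 1" "q \<notin> {1/6..3/4}" "11 \<le> k"
  shows "6 * real k < Vk 1 k q"
proof (cases "q < 1/6")
  case True
  have "6 * real k < real k / q" using assms True by (simp add: field_simps)
  then show ?thesis using Vk_ge_inverse[of q k] assms by simp
next
  case False
  then show ?thesis using Vk_ge_near_one[of q k] assms by simp
qed

lemma exists_is_opt_p:
  assumes "11 \<le> k"
  shows "\<exists>p. is_opt_p 1 k p"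
proof -
  have "continuous_on {1/6..3/4} (Vk 1 k)"
    unfolding Vk_def by (intro continuous_intros) auto
  then obtain x where x: "x \<in> {1/6..3/4}" and min: "\<forall>y\<in>{1/6..3/4}. Vk 1 k x \<le> Vk 1 k y"
    using continuous_attains_inf[of "{1/6..3/4}" "Vk 1 k"] by auto
  have "sqrt 2 - 1 \<in> {1/6..3/4::real}" using sqrt2_bounds by auto
  then have "Vk 1 k x \<le> 6 * real k" using min Vk_sqrt2_minus_1_le[of k] by fastforce
  then have "Vk 1 k x \<le> Vk 1 k q" if "q \<in> {0<..<1}" for q
    using that min Vk_gt_6k_outside[of q k] assms by (cases "q \<in> {1/6..3/4}") auto
  with x have "is_opt_p 1 k x" unfolding is_opt_p_def by auto
  then show ?thesis ..
qed

lemma is_opt_p_near_sqrt2_minus_1: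
  assumes "11 \<le> k" "is_opt_p 1 k p"
  shows "real k * (p - (sqrt 2 - 1))^2 \<le> 32"
proof -
  define s :: real where "s = sqrt 2 - 1"
  have p: "0 < p" "p < 1" and "s \<in> {0<..<1}"
    using assms(2) sqrt2_bounds unfolding is_opt_p_def s_def by auto
  then have opt: "Vk 1 k p \<le> Vk 1 k s" using assms(2) unfolding is_opt_p_def by blast
  then have "p < 3/4"
    using Vk_sqrt2_minus_1_le[of k] Vk_ge_near_one[of p k] assms p unfolding s_def by linarith
  then have "real k * variance_rate p - 32 \<le> real k * variance_rate s"
    using Vk_ge_variance_rate[of p k] Vk_le_variance_rate[of s k] opt p \<open>s \<in> {0<..<1}\<close> by auto
  moreover have "real k * (p - s)^2 \<le> real k * (variance_rate p - variance_rate s)"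
    using variance_rate_excess[OF p] unfolding s_def by (intro mult_left_mono) auto
  ultimately show ?thesis unfolding s_def by (simp add: algebra_simps)
qed

lemma LIMSEQ_zero_if_scaled_square_bounded:
  fixes f :: "nat \<Rightarrow> real"
  assumes "\<forall>\<^sub>F k in sequentially. real k * (f k)^2 \<le> C"
  shows "f \<longlonglongrightarrow> 0"
proof (rule tendsto_0_le)
  show "(\<lambda>k. sqrt (C / real k)) \<longlonglongrightarrow> 0"
    using tendsto_real_sqrt[OF lim_const_over_n[of C]] by simp
  show "\<forall>\<^sub>F k in sequentially. norm (f k) \<le> norm (sqrt (C / real k)) * 1"
    using eventually_conj[OF assms eventually_gt_at_top[of 0]]
  proof (rule eventually_mono)
    fix k assume "real k * (f k)^2 \<le> C \<and> 0 < k"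
    then have "(f k)^2 \<le> C / real k" by (simp add: field_simps)
    then have "sqrt ((f k)^2) \<le> sqrt (C / real k)" by (rule real_sqrt_le_mono)
    then show "norm (f k) \<le> norm (sqrt (C / real k)) * 1" by simp
  qed
qed

theorem corollary1:
  fixes B :: real
  assumes "B > 0"
  shows "(\<forall>\<^sub>F k in sequentially. \<exists>p. is_opt_p B k p) \<and>
         (\<forall>ps :: nat \<Rightarrow> real. (\<forall>\<^sub>F k in sequentially. is_opt_p B k (ps k))
              \<longrightarrow> ps \<longlonglongrightarrow> sqrt 2 - 1)"
proof (intro conjI allI impI)
  have scale: "is_opt_p B k p \<longleftrightarrow> is_opt_p 1 k p" for k p
    using assms by (intro is_opt_p_scale_iff) simp
  show "\<forall>\<^sub>F k in sequentially. \<exists>p. is_opt_p B k p"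
    using eventually_ge_at_top[of "11::nat"] by eventually_elim (simp add: scale exists_is_opt_p)
  fix ps :: "nat \<Rightarrow> real"
  assume "\<forall>\<^sub>F k in sequentially. is_opt_p B k (ps k)"
  then have "\<forall>\<^sub>F k in sequentially. real k * (ps k - (sqrt 2 - 1))^2 \<le> 32"
    using eventually_ge_at_top[of "11::nat"]
    by eventually_elim (simp add: scale is_opt_p_near_sqrt2_minus_1)
  then have "(\<lambda>k. ps k - (sqrt 2 - 1)) \<longlonglongrightarrow> 0"
    by (rule LIMSEQ_zero_if_scaled_square_bounded)
  then show "ps \<longlonglongrightarrow> sqrt 2 - 1" by (simp add: LIM_zero_iff)
qed

end
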